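(* For every two-player stage game $G$: if $G\in\mathcal{G}_{LS}^{p,p}$ then $G\in\mathcal{G}_{LS}^{m,m}$; that is, $\mathcal{G}_{LS}^{p,p}\subseteq\mathcal{G}_{LS}^{m,m}$.
   Context: A two-player stage game $G$ has finite nonempty action sets $A_1,A_2$ and payoffs $u_1,u_2:A_1\times A_2\to\mathbb{R}$, extended to mixed strategies by expectation. $G(T)$ is the $T$-round repetition with realized actions observed each round and payoffs the expected sum of stage payoffs; an SPE of $G(T)$ is a strategy profile whose continuation after every history of length $k<T$ is a Nash equilibrium of $G(T-k)$. Regimes: pure-pure ($p,p$): both players restricted to actions (in the stage game and in every round, including deviations); mixed-pure ($m,p$): player 1 may mix, player 2 uses only actions; mixed-mixed ($m,m$): both may mix. For regime $r$, $\mathrm{Nash}^r(G)$ is the set of stage-game profiles available in $r$ from which no player can profitably deviate unilaterally to a strategy available in $r$. Locally suboptimal behavior occurs in an SPE $\mu$ of $G(T)$ (regime $r$) if for some history $h$ of length $k<T$, $(\mu_1(h),\mu_2(h))\notin\mathrm{Nash}^r(G)$. $\mathcal{G}_{LS}^r$ is the set of stage games $G$ for which there exist $T\ge1$ and an SPE of $G(T)$ in regime $r$ in which locally suboptimal behavior occurs. *)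

theory Defs
  imports Complex_Main
begin

definition mixed :: "('a::finite \<Rightarrow> real) \<Rightarrow> bool" where
  "mixed \<sigma> \<longleftrightarrow> (\<forall>a. 0 \<le> \<sigma> a) \<and> sum \<sigma> UNIV = 1"

definition pure :: "('a::finite \<Rightarrow> real) \<Rightarrow> bool" where
  "pure \<sigma> \<longleftrightarrow> (\<exists>a. \<sigma> = (\<lambda>x. if x = a then 1 else 0))"

datatype regime = PP | MP | MM

definition allowed1 :: "regime \<Rightarrow> ('a::finite \<Rightarrow> real) \<Rightarrow> bool" where
  "allowed1 r \<sigma> = (if r = PP then pure \<sigma> else mixed \<sigma>)"

definition allowed2 :: "regime \<Rightarrow> ('b::finite \<Rightarrow> real) \<Rightarrow> bool" where
  "allowed2 r \<tau> = (if r = MM then mixed \<tau> else pure \<tau>)"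

definition EU :: "('a::finite \<Rightarrow> 'b::finite \<Rightarrow> real) \<Rightarrow> ('a \<Rightarrow> real) \<Rightarrow> ('b \<Rightarrow> real) \<Rightarrow> real" where
  "EU u \<sigma> \<tau> = (\<Sum>a\<in>UNIV. \<Sum>b\<in>UNIV. \<sigma> a * \<tau> b * u a b)"

definition stage_nash :: "regime \<Rightarrow> ('a::finite \<Rightarrow> 'b::finite \<Rightarrow> real) \<Rightarrow> ('a \<Rightarrow> 'b \<Rightarrow> real)
    \<Rightarrow> ('a \<Rightarrow> real) \<Rightarrow> ('b \<Rightarrow> real) \<Rightarrow> bool" where
  "stage_nash r u1 u2 \<sigma> \<tau> \<longleftrightarrow> allowed1 r \<sigma> \<and> allowed2 r \<tau> \<and>
     (\<forall>\<sigma>'. allowed1 r \<sigma>' \<longrightarrow> EU u1 \<sigma>' \<tau> \<le> EU u1 \<sigma> \<tau>) \<and>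
     (\<forall>\<tau>'. allowed2 r \<tau>' \<longrightarrow> EU u2 \<sigma> \<tau>' \<le> EU u2 \<sigma> \<tau>)"

text \<open>Histories are lists of realized action profiles (oldest first). A strategy of the
  repeated game maps each history to a stage strategy.\<close>
type_synonym ('a, 'b) hist = "('a \<times> 'b) list"

fun cont_val :: "('a::finite \<Rightarrow> 'b::finite \<Rightarrow> real) \<Rightarrow> (('a, 'b) hist \<Rightarrow> 'a \<Rightarrow> real)
    \<Rightarrow> (('a, 'b) hist \<Rightarrow> 'b \<Rightarrow> real) \<Rightarrow> ('a, 'b) hist \<Rightarrow> nat \<Rightarrow> real" where
  "cont_val u s1 s2 h 0 = 0"
| "cont_val u s1 s2 h (Suc n) =
     (\<Sum>a\<in>UNIV. \<Sum>b\<in>UNIV. s1 h a * s2 h b * (u a b + cont_val u s1 s2 (h @ [(a, b)]) n))"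

definition strat_ok1 :: "regime \<Rightarrow> (('a::finite, 'b::finite) hist \<Rightarrow> 'a \<Rightarrow> real) \<Rightarrow> bool" where
  "strat_ok1 r s1 \<longleftrightarrow> (\<forall>h. allowed1 r (s1 h))"

definition strat_ok2 :: "regime \<Rightarrow> (('a::finite, 'b::finite) hist \<Rightarrow> 'b \<Rightarrow> real) \<Rightarrow> bool" where
  "strat_ok2 r s2 \<longleftrightarrow> (\<forall>h. allowed2 r (s2 h))"

definition SPE :: "regime \<Rightarrow> ('a::finite \<Rightarrow> 'b::finite \<Rightarrow> real) \<Rightarrow> ('a \<Rightarrow> 'b \<Rightarrow> real) \<Rightarrow> nat
    \<Rightarrow> (('a, 'b) hist \<Rightarrow> 'a \<Rightarrow> real) \<Rightarrow> (('a, 'b) hist \<Rightarrow> 'b \<Rightarrow> real) \<Rightarrow> bool" where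
  "SPE r u1 u2 T s1 s2 \<longleftrightarrow> strat_ok1 r s1 \<and> strat_ok2 r s2 \<and>
     (\<forall>h. length h < T \<longrightarrow>
        (\<forall>s1'. strat_ok1 r s1' \<longrightarrow>
           cont_val u1 s1' s2 h (T - length h) \<le> cont_val u1 s1 s2 h (T - length h)) \<and>
        (\<forall>s2'. strat_ok2 r s2' \<longrightarrow>
           cont_val u2 s1 s2' h (T - length h) \<le> cont_val u2 s1 s2 h (T - length h)))"

definition GLS :: "regime \<Rightarrow> ('a::finite \<Rightarrow> 'b::finite \<Rightarrow> real) \<Rightarrow> ('a \<Rightarrow> 'b \<Rightarrow> real) \<Rightarrow> bool" where
  "GLS r u1 u2 \<longleftrightarrow> (\<exists>T\<ge>1. \<exists>s1 s2. SPE r u1 u2 T s1 s2 \<and>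
     (\<exists>h. length h < T \<and> \<not> stage_nash r u1 u2 (s1 h) (s2 h)))"

end

theory Submission
  imports Defs
begin

text \<open>A pure-strategy SPE stays an SPE when both players may mix, because every mixed
  deviation is weakly dominated by a pure one: by backward induction, at each history the
  deviator can replace its lottery by the action maximising the (already purified)
  continuation value, and a lottery never beats its best outcome. Conversely a pure profile
  that is a Nash equilibrium with mixing allowed is one without it, so local suboptimality
  persists.\<close>

definition point_mass :: "'a \<Rightarrow> 'a \<Rightarrow> real" where
  "point_mass a = (\<lambda>x. if x = a then 1 else 0)"

lemma pure_point_mass: "pure (point_mass a)"
  unfolding pure_def point_mass_def by blast

lemma pure_imp_mixed: "pure (\<sigma>::'a::finite \<Rightarrow> real) \<Longrightarrow> mixed \<sigma>"
  unfolding pure_def mixed_def by auto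

lemma pure_nonneg: "pure \<sigma> \<Longrightarrow> 0 \<le> \<sigma> x"
  unfolding pure_def by auto

lemma exists_maximizer: "\<exists>a0. \<forall>a. (f :: 'a::finite \<Rightarrow> 'b::linorder) a \<le> f a0"
proof -
  have "Max (range f) \<in> range f" by (rule Max_in) auto
  then obtain a0 where "f a0 = Max (range f)" by (metis imageE)
  then show ?thesis by (metis Max_ge finite UNIV_I finite_imageI image_eqI)
qed

lemma mixed_expectation_le:
  assumes "mixed \<sigma>" and "\<And>a. W a \<le> c"
  shows "(\<Sum>a\<in>UNIV. \<sigma> a * W a) \<le> c"
proof -
  have "(\<Sum>a\<in>UNIV. \<sigma> a * W a) \<le> (\<Sum>a\<in>UNIV. \<sigma> a * c)"
    using assms by (intro sum_mono mult_left_mono) (auto simp: mixed_def)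
  also have "\<dots> = c" using assms(1) by (simp add: mixed_def sum_distrib_right[symmetric])
  finally show ?thesis .
qed

lemma cont_val_Suc_nested: "cont_val u s1 s2 h (Suc n) =
   (\<Sum>a\<in>UNIV. s1 h a * (\<Sum>b\<in>UNIV. s2 h b * (u a b + cont_val u s1 s2 (h @ [(a, b)]) n)))"
  by (simp add: sum_distrib_left mult.assoc)

lemma cont_val_cong_extensions:
  "(\<And>t. s1 (h @ t) = s1' (h @ t)) \<Longrightarrow> cont_val u s1 s2 h n = cont_val u s1' s2 h n"
proof (induction n arbitrary: h)
  case 0 then show ?case by simp
next
  case (Suc n)
  have "s1 h = s1' h" using Suc.prems[of "[]"] by simp
  moreover have "cont_val u s1 s2 (h @ [(a, b)]) n = cont_val u s1' s2 (h @ [(a, b)]) n" for a b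
    by (rule Suc.IH) (metis Suc.prems append_Cons append_assoc self_append_conv2)
  ultimately show ?case by simp
qed

lemma map_swap_involution: "map prod.swap (map prod.swap h) = h"
  by (induction h) auto

lemma cont_val_swap_players: "cont_val u s1 s2 h n = cont_val (\<lambda>b a. u a b)
   (\<lambda>g. s2 (map prod.swap g)) (\<lambda>g. s1 (map prod.swap g)) (map prod.swap h) n"
proof (induction n arbitrary: h)
  case 0 then show ?case by simp
next
  case (Suc n)
  have "cont_val u s1 s2 h (Suc n) =
     (\<Sum>a\<in>UNIV. \<Sum>b\<in>UNIV. s1 h a * s2 h b * (u a b + cont_val u s1 s2 (h @ [(a, b)]) n))"
    by simp
  also have "\<dots> =
     (\<Sum>b\<in>UNIV. \<Sum>a\<in>UNIV. s1 h a * s2 h b * (u a b + cont_val u s1 s2 (h @ [(a, b)]) n))"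
    by (rule sum.swap)
  also have "\<dots> = cont_val (\<lambda>b a. u a b) (\<lambda>g. s2 (map prod.swap g))
      (\<lambda>g. s1 (map prod.swap g)) (map prod.swap h) (Suc n)"
    by (simp add: Suc.IH map_swap_involution mult.commute mult.left_commute)
  finally show ?case .
qed

lemma pure_deviation_dominates1:
  fixes s1' :: "('a::finite, 'b::finite) hist \<Rightarrow> 'a \<Rightarrow> real"
  assumes mixed: "\<And>g. mixed (s1' g)" and nonneg: "\<And>g b. 0 \<le> s2 g b"
  shows "\<exists>p. (\<forall>g. pure (p g)) \<and> cont_val u s1' s2 h n \<le> cont_val u p s2 h n"
proof (induction n arbitrary: h)
  case 0
  show ?case using pure_point_mass by auto
next
  case (Suc n)
  from Suc.IH obtain P where P_pure: "\<And>g g'. pure (P g g')"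
    and P_le: "\<And>g. cont_val u s1' s2 g n \<le> cont_val u (P g) s2 g n"
    by metis
  define W where "W a = (\<Sum>b\<in>UNIV. s2 h b *
      (u a b + cont_val u (P (h @ [(a, b)])) s2 (h @ [(a, b)]) n))" for a
  obtain a0 where a0: "\<And>a. W a \<le> W a0" using exists_maximizer by blast
  \<comment> \<open>play \<open>a0\<close> at \<open>h\<close>, then below each successor of \<open>h\<close> its purified deviation\<close>
  define p where "p g = (if take (length h) g = h \<and> length h < length g
      then P (take (Suc (length h)) g) g else point_mass a0)" for g
  have p_pure: "pure (p g)" for g
    unfolding p_def using P_pure pure_point_mass by auto
  have p_at_h: "p h = point_mass a0" unfolding p_def by simp
  have p_succ: "cont_val u p s2 (h @ [(a, b)]) n = cont_val u (P (h @ [(a, b)])) s2 (h @ [(a, b)]) n"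
    for a b by (rule cont_val_cong_extensions) (simp add: p_def)
  have "cont_val u s1' s2 h (Suc n) \<le> (\<Sum>a\<in>UNIV. s1' h a * W a)"
    unfolding cont_val_Suc_nested W_def
    using mixed nonneg P_le by (intro sum_mono mult_left_mono add_left_mono) (auto simp: mixed_def)
  also have "\<dots> \<le> W a0" using mixed a0 by (rule mixed_expectation_le)
  also have "\<dots> = cont_val u p s2 h (Suc n)"
    unfolding cont_val_Suc_nested W_def
    by (simp add: p_at_h p_succ point_mass_def if_distrib[of "\<lambda>x. x * _"] cong: if_cong)
  finally show ?case using p_pure by blast
qed
lemma pure_deviation_dominates2:
  fixes s2' :: "('a::finite, 'b::finite) hist \<Rightarrow> 'b \<Rightarrow> real"
  assumes mixed: "\<And>g. mixed (s2' g)" and nonneg: "\<And>g a. 0 \<le> s1 g a"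
  shows "\<exists>q. (\<forall>g. pure (q g)) \<and> cont_val u s1 s2' h n \<le> cont_val u s1 q h n"
proof -
  obtain p where p_pure: "\<forall>g. pure (p g)"
    and p_le: "cont_val (\<lambda>b a. u a b) (\<lambda>g. s2' (map prod.swap g)) (\<lambda>g. s1 (map prod.swap g))
        (map prod.swap h) n
      \<le> cont_val (\<lambda>b a. u a b) p (\<lambda>g. s1 (map prod.swap g)) (map prod.swap h) n"
    using pure_deviation_dominates1[of "\<lambda>g. s2' (map prod.swap g)" "\<lambda>g. s1 (map prod.swap g)"]
      mixed nonneg by blast
  define q where "q g = p (map prod.swap g)" for g
  have "cont_val u s1 q h n
      = cont_val (\<lambda>b a. u a b) p (\<lambda>g. s1 (map prod.swap g)) (map prod.swap h) n"
    by (subst cont_val_swap_players) (simp add: q_def map_swap_involution)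
  then have "cont_val u s1 s2' h n \<le> cont_val u s1 q h n"
    using p_le cont_val_swap_players[of u s1 s2' h n] by linarith
  moreover have "\<forall>g. pure (q g)" using p_pure by (simp add: q_def)
  ultimately show ?thesis by blast
qed

lemma SPE_PP_imp_SPE_MM:
  assumes spe: "SPE PP u1 u2 T s1 s2"
  shows "SPE MM u1 u2 T s1 s2"
  unfolding SPE_def
proof (intro conjI allI impI)
  have pure1: "\<And>g. pure (s1 g)" and pure2: "\<And>g. pure (s2 g)"
    using spe by (auto simp: SPE_def strat_ok1_def strat_ok2_def allowed1_def allowed2_def)
  then show "strat_ok1 MM s1" "strat_ok2 MM s2"
    by (auto simp: strat_ok1_def strat_ok2_def allowed1_def allowed2_def pure_imp_mixed)
  fix h :: "('a \<times> 'b) list" assume len: "length h < T"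
  show "cont_val u1 s1' s2 h (T - length h) \<le> cont_val u1 s1 s2 h (T - length h)"
    if "strat_ok1 MM s1'" for s1'
  proof -
    have "\<And>g. mixed (s1' g)" using that by (simp add: strat_ok1_def allowed1_def)
    then obtain p where p_pure: "\<forall>g. pure (p g)"
      and le: "cont_val u1 s1' s2 h (T - length h) \<le> cont_val u1 p s2 h (T - length h)"
      using pure_deviation_dominates1 pure2 pure_nonneg by blast
    have "strat_ok1 PP p" using p_pure by (simp add: strat_ok1_def allowed1_def)
    with spe len have "cont_val u1 p s2 h (T - length h) \<le> cont_val u1 s1 s2 h (T - length h)"
      by (simp add: SPE_def)
    with le show ?thesis by linarith
  qed
  show "cont_val u2 s1 s2' h (T - length h) \<le> cont_val u2 s1 s2 h (T - length h)"
    if "strat_ok2 MM s2'" for s2'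
  proof -
    have "\<And>g. mixed (s2' g)" using that by (simp add: strat_ok2_def allowed2_def)
    then obtain q where q_pure: "\<forall>g. pure (q g)"
      and le: "cont_val u2 s1 s2' h (T - length h) \<le> cont_val u2 s1 q h (T - length h)"
      using pure_deviation_dominates2 pure1 pure_nonneg by blast
    have "strat_ok2 PP q" using q_pure by (simp add: strat_ok2_def allowed2_def)
    with spe len have "cont_val u2 s1 q h (T - length h) \<le> cont_val u2 s1 s2 h (T - length h)"
      by (simp add: SPE_def)
    with le show ?thesis by linarith
  qed
qed

lemma stage_nash_MM_imp_PP:
  assumes "stage_nash MM u1 u2 \<sigma> \<tau>" and "pure \<sigma>" and "pure \<tau>"
  shows "stage_nash PP u1 u2 \<sigma> \<tau>"
  using assms pure_imp_mixed unfolding stage_nash_def allowed1_def allowed2_def by (simp; blast)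

theorem mainTheorem16:
  fixes u1 :: "'a::finite \<Rightarrow> 'b::finite \<Rightarrow> real" and u2 :: "'a \<Rightarrow> 'b \<Rightarrow> real"
  assumes "GLS PP u1 u2"
  shows "GLS MM u1 u2"
proof -
  from assms obtain T s1 s2 h where T: "T \<ge> 1" and spe: "SPE PP u1 u2 T s1 s2"
    and len: "length h < T" and not_nash: "\<not> stage_nash PP u1 u2 (s1 h) (s2 h)"
    unfolding GLS_def by blast
  have "pure (s1 h)" "pure (s2 h)"
    using spe by (auto simp: SPE_def strat_ok1_def strat_ok2_def allowed1_def allowed2_def)
  with not_nash have "\<not> stage_nash MM u1 u2 (s1 h) (s2 h)"
    using stage_nash_MM_imp_PP by blast
  with T len SPE_PP_imp_SPE_MM[OF spe] show ?thesis
    unfolding GLS_def by blast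
qed

end
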